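(* Let $f(x):=x^n+a_1x^{n-1}+a_2x^{n-2}+\cdots+a_n$ be a real polynomial with roots $r,x_2,x_3,\ldots,x_n$, where $r$ is real and $\mathrm{Re}(x_j)\le 0$ for $j=2,3,\ldots,n$. Then: (i) Let $t$ be the largest integer such that $a_{2t}\ne0$. Then either $a_{2j}>0$ for all $j=1,2,\ldots,t$, or there exists $s\in\{1,2,\ldots,t\}$ such that $a_{2j}>0$ for $j=1,\ldots,s-1$, $a_{2s}\le 0$, and $a_{2j}<0$ for $j=s+1,\ldots,t$. (ii) Let $t'$ be the largest integer such that $a_{2t'-1}\ne0$. Then either $a_{2j-1}>0$ for all $j=1,2,\ldots,t'$, or there exists $s'\in\{1,2,\ldots,t'\}$ such that $a_{2j-1}>0$ for $j=1,\ldots,s'-1$, $a_{2s'-1}\le 0$, and $a_{2j-1}<0$ for $j=s'+1,\ldots,t'$. *)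

theory Defs
  imports Complex_Main "HOL-Computational_Algebra.Polynomial"
begin

text \<open>For a monic polynomial f(x) = x^n + a_1 x^(n-1) + ... + a_n, the coefficient a_k
  (with a_0 = 1); a_k is taken to be 0 for k > n.\<close>
definition acoef :: "real poly \<Rightarrow> nat \<Rightarrow> real" where
  "acoef f k = (if k \<le> degree f then coeff f (degree f - k) else 0)"

end

(*
  Dividing out the real root gives f = (x - r) g with g monic and all roots in Re z \<le> 0, so
  a_k = b_k - r b_(k-1), where b_k is the coefficient of x^(deg g - k) in g.  Up to a power of x,
  g = e h, where e is a product of factors x^2 + q (roots on the imaginary axis) and h a product
  of factors x + c and x^2 + p x + q with c, p, q > 0.

  If deg h \<ge> 2, all b_k are positive and b_(k+1) b_k > b_(k+2) b_(k-1).  Then a_k \<le> 0 means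
  b_k / b_(k-1) \<le> r, hence b_(k+2) / b_(k+1) < r, i.e. a_(k+2) < 0: once a coefficient of
  either parity is nonpositive, all later ones of that parity up to any nonzero one are
  negative.  The inequality is one of a family of 2x2 Toeplitz minors of the coefficient
  sequence whose positivity survives multiplication by each factor.  If deg h \<le> 1, e h is
  even or (x + c) times even, and the same propagation follows from positivity and strict
  log-concavity (in steps of two) of the coefficients of e.
*)

theory Submission
  imports Defs "HOL-Computational_Algebra.Fundamental_Theorem_Algebra"
begin

declare mult_pCons_left [simp del]

definition icoeff :: "'a::zero poly \<Rightarrow> int \<Rightarrow> 'a" where
  "icoeff g i = (if i < 0 then 0 else coeff g (nat i))"

lemma icoeff_neg: "i < 0 \<Longrightarrow> icoeff g i = 0"
  by (simp add: icoeff_def)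

lemma icoeff_gt_degree: "int (degree g) < i \<Longrightarrow> icoeff g i = 0"
  by (auto simp: icoeff_def coeff_eq_0)

lemma icoeff_pCons_0: "icoeff (pCons 0 g) i = icoeff g (i - 1)"
  by (cases "i \<le> 0") (auto simp: icoeff_def nat_diff_distrib' coeff_pCons split: nat.split)

lemma icoeff_add: "icoeff (f + g) i = icoeff f i + icoeff g i"
  by (simp add: icoeff_def)

lemma icoeff_smult: "icoeff (smult c g) i = c * icoeff g i"
  by (simp add: icoeff_def)

lemma icoeff_linear_mult:
  fixes g :: "'a::comm_semiring_1 poly"
  shows "icoeff ([:c, 1:] * g) i = c * icoeff g i + icoeff g (i - 1)"
  by (simp add: mult_pCons_left icoeff_add icoeff_smult icoeff_pCons_0)

lemma icoeff_quadratic_mult: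
  fixes g :: "'a::comm_semiring_1 poly"
  shows "icoeff ([:q, p, 1:] * g) i = q * icoeff g i + p * icoeff g (i - 1) + icoeff g (i - 2)"
  by (simp add: mult_pCons_left icoeff_add icoeff_smult icoeff_pCons_0 algebra_simps)

lemma degree_linear_mult:
  fixes g :: "'a::idom poly"
  shows "g \<noteq> 0 \<Longrightarrow> degree ([:c, 1:] * g) = degree g + 1"
  by (simp add: degree_mult_eq)

lemma degree_quadratic_mult:
  fixes g :: "'a::idom poly"
  shows "g \<noteq> 0 \<Longrightarrow> degree ([:q, p, 1:] * g) = degree g + 2"
  by (simp add: degree_mult_eq)

definition coeff_minor :: "'a::comm_ring poly \<Rightarrow> int \<Rightarrow> int \<Rightarrow> int \<Rightarrow> 'a" where
  "coeff_minor g u v d = icoeff g u * icoeff g v - icoeff g (u - d) * icoeff g (v + d)"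

(* The invariant of Hurwitz products. *)

definition admissible_shift :: "int \<Rightarrow> int \<Rightarrow> int \<Rightarrow> bool" where
  "admissible_shift u v d \<longleftrightarrow> 1 \<le> d \<and> even (v + d - u) \<and> 2 \<le> v + d - u"

definition minor_positive :: "'a::linordered_idom poly \<Rightarrow> bool" where
  "minor_positive g \<longleftrightarrow>
     (\<forall>i\<in>{0..int (degree g)}. 0 < icoeff g i) \<and>
     (\<forall>u\<in>{0..int (degree g)}. \<forall>v\<in>{0..int (degree g)}. \<forall>d.
        admissible_shift u v d \<longrightarrow> 0 < coeff_minor g u v d)"

lemma admissible_shift_cong:
  "admissible_shift u v d \<Longrightarrow> v' + d' - u' = v + d - u \<Longrightarrow> 1 \<le> d' \<Longrightarrow> admissible_shift u' v' d'"
  unfolding admissible_shift_def by metis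

lemma coeff_minor_0 [simp]: "coeff_minor g u v 0 = 0"
  by (simp add: coeff_minor_def)

lemma coeff_minor_linear_mult:
  fixes g :: "'a::comm_ring_1 poly"
  shows "coeff_minor ([:c, 1:] * g) u v d =
     c\<^sup>2 * coeff_minor g u v d + c * coeff_minor g u (v - 1) (d + 1)
     + c * coeff_minor g (u - 1) v (d - 1) + coeff_minor g (u - 1) (v - 1) d"
  unfolding coeff_minor_def icoeff_linear_mult by (simp add: algebra_simps power2_eq_square)

lemma coeff_minor_quadratic_mult:
  fixes g :: "'a::comm_ring_1 poly"
  shows "coeff_minor ([:q, p, 1:] * g) u v d =
     q\<^sup>2 * coeff_minor g u v d + q * p * coeff_minor g u (v - 1) (d + 1)
     + q * coeff_minor g u (v - 2) (d + 2) + p * q * coeff_minor g (u - 1) v (d - 1)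
     + p\<^sup>2 * coeff_minor g (u - 1) (v - 1) d + p * coeff_minor g (u - 1) (v - 2) (d + 1)
     + q * coeff_minor g (u - 2) v (d - 2) + p * coeff_minor g (u - 2) (v - 1) (d - 1)
     + coeff_minor g (u - 2) (v - 2) d"
  unfolding coeff_minor_def icoeff_quadratic_mult by (simp add: algebra_simps power2_eq_square)

lemma coeff_minor_exchange:
  "coeff_minor g u (v - 2) 3 + coeff_minor g (u - 2) v (- 1)
     = coeff_minor g (u - 2) v 1 + coeff_minor g u (v - 2) 1"
  unfolding coeff_minor_def by (simp add: algebra_simps)

lemma minor_positive_nonzero: "minor_positive g \<Longrightarrow> g \<noteq> 0"
  by (auto simp: minor_positive_def icoeff_def)

lemma minor_positive_icoeff_pos:
  "minor_positive g \<Longrightarrow> 0 \<le> i \<Longrightarrow> i \<le> int (degree g) \<Longrightarrow> 0 < icoeff g i"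
  by (simp add: minor_positive_def)

lemma minor_positive_minor_pos:
  "minor_positive g \<Longrightarrow> admissible_shift u v d \<Longrightarrow> 0 \<le> u \<Longrightarrow> u \<le> int (degree g)
    \<Longrightarrow> 0 \<le> v \<Longrightarrow> v \<le> int (degree g) \<Longrightarrow> 0 < coeff_minor g u v d"
  by (simp add: minor_positive_def)

lemma minor_positive_icoeff_nonneg:
  assumes "minor_positive g" shows "0 \<le> icoeff g i"
  using assms unfolding minor_positive_def
  by (cases "0 \<le> i \<and> i \<le> int (degree g)") (auto simp: icoeff_neg icoeff_gt_degree less_imp_le)

lemma minor_positive_minor_nonneg:
  assumes g: "minor_positive g" and uvd: "admissible_shift u v d"
  shows "0 \<le> coeff_minor g u v d"
proof (cases "u \<in> {0..int (degree g)} \<and> v \<in> {0..int (degree g)}")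
  case True
  then show ?thesis using g uvd unfolding minor_positive_def by (auto intro: less_imp_le)
next
  case False
  then have "icoeff g (u - d) * icoeff g (v + d) = 0"
    using uvd by (auto simp: admissible_shift_def icoeff_neg icoeff_gt_degree)
  moreover have "0 \<le> icoeff g u * icoeff g v"
    using minor_positive_icoeff_nonneg[OF g] by simp
  ultimately show ?thesis unfolding coeff_minor_def by linarith
qed

lemma minor_positive_minor_nonneg_shifted:
  assumes "minor_positive g" "admissible_shift u v d" "v' + d' - u' = v + d - u" "0 \<le> d'"
  shows "0 \<le> coeff_minor g u' v' d'"
proof (cases "d' = 0")
  case False
  with assms have "admissible_shift u' v' d'" by (intro admissible_shift_cong[OF assms(2)]) auto
  with assms(1) show ?thesis by (rule minor_positive_minor_nonneg)
qed simp

lemma minor_positiveI: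
  assumes coeff: "\<And>i. 0 \<le> i \<Longrightarrow> i \<le> int (degree g) \<Longrightarrow> 0 < icoeff g i"
    and minor: "\<And>u v d. admissible_shift u v d \<Longrightarrow> 0 \<le> u - d \<Longrightarrow> u \<le> int (degree g)
                  \<Longrightarrow> 0 \<le> v \<Longrightarrow> v \<le> int (degree g) \<Longrightarrow> 0 < coeff_minor g u v d"
  shows "minor_positive g"
  unfolding minor_positive_def
proof (intro conjI ballI allI impI)
  fix u v d assume uv: "u \<in> {0..int (degree g)}" "v \<in> {0..int (degree g)}"
    and uvd: "admissible_shift u v d"
  show "0 < coeff_minor g u v d"
  proof (cases "0 \<le> u - d")
    case False
    then show ?thesis using coeff uv by (simp add: coeff_minor_def icoeff_neg)
  qed (use minor uv uvd in auto)
qed (use coeff in auto)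

lemma linear_mult_icoeff_pos:
  assumes g: "minor_positive g" and c: "0 < c" and i: "0 \<le> i" "i \<le> int (degree g) + 1"
  shows "0 < icoeff ([:c, 1:] * g) i"
proof (cases "i \<le> int (degree g)")
  case True
  then show ?thesis
    using minor_positive_icoeff_pos[OF g, of i] minor_positive_icoeff_nonneg[OF g, of "i - 1"] c i
    by (simp add: icoeff_linear_mult add_pos_nonneg)
next
  case False
  then show ?thesis
    using minor_positive_icoeff_pos[OF g, of "i - 1"] minor_positive_icoeff_nonneg[OF g, of i] c i
    by (simp add: icoeff_linear_mult add_nonneg_pos)
qed

lemma minor_positive_linear_mult:
  assumes g: "minor_positive g" and c: "0 < c"
  shows "minor_positive ([:c, 1:] * g)"
proof (rule minor_positiveI)
  define m where "m = int (degree g)"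
  have deg: "int (degree ([:c, 1:] * g)) = m + 1"
    using degree_linear_mult[OF minor_positive_nonzero[OF g]] by (simp add: m_def)
  show "0 < icoeff ([:c, 1:] * g) i" if "0 \<le> i" "i \<le> int (degree ([:c, 1:] * g))" for i
    using linear_mult_icoeff_pos[OF g c] that deg m_def by simp
  fix u v d
  assume uvd: "admissible_shift u v d" and u: "0 \<le> u - d" "u \<le> int (degree ([:c, 1:] * g))"
    and v: "0 \<le> v" "v \<le> int (degree ([:c, 1:] * g))"
  let ?M = "coeff_minor g"
  have d: "1 \<le> d" using uvd by (simp add: admissible_shift_def)
  \<comment> \<open>if u or v exceeds m, the admissible minor at (u - 1, v - 1) still lies in range\<close>
  have "0 < ?M u v d \<or> 0 < ?M (u - 1) (v - 1) d"
  proof (cases "u \<le> m \<and> v \<le> m")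
    case True
    then show ?thesis using minor_positive_minor_pos[OF g uvd] u v d by (simp add: m_def)
  next
    case False
    with u v deg uvd have "1 \<le> v" by (auto simp: admissible_shift_def)
    moreover have "admissible_shift (u - 1) (v - 1) d" using d by (intro admissible_shift_cong[OF uvd]) auto
    ultimately show ?thesis
      using minor_positive_minor_pos[OF g] u v d deg by (simp add: m_def)
  qed
  then have "0 < c\<^sup>2 * ?M u v d \<or> 0 < ?M (u - 1) (v - 1) d"
    using c by (auto simp: zero_less_mult_iff)
  moreover have "0 \<le> ?M u v d" "0 \<le> ?M u (v - 1) (d + 1)" "0 \<le> ?M (u - 1) v (d - 1)"
    "0 \<le> ?M (u - 1) (v - 1) d"
    using d by (auto intro: minor_positive_minor_nonneg_shifted[OF g uvd])
  moreover from this have "0 \<le> c\<^sup>2 * ?M u v d" "0 \<le> c * ?M u (v - 1) (d + 1)"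
    "0 \<le> c * ?M (u - 1) v (d - 1)"
    using c by simp_all
  ultimately show "0 < coeff_minor ([:c, 1:] * g) u v d"
    unfolding coeff_minor_linear_mult by linarith
qed

lemma minor_positive_minor_pair_nonneg:
  assumes g: "minor_positive g" and uvd: "admissible_shift u v d"
  shows "0 \<le> coeff_minor g u (v - 2) (d + 2) + coeff_minor g (u - 2) v (d - 2)"
proof (cases "d = 1")
  case True
  have "0 \<le> coeff_minor g (u - 2) v 1"
    using True uvd by (intro minor_positive_minor_nonneg[OF g]) (auto simp: admissible_shift_def)
  moreover have "0 \<le> coeff_minor g u (v - 2) 1"
  proof (cases "v = u + 1")
    case True
    then show ?thesis by (simp add: coeff_minor_def)
  next
    case False
    have "even (v + 1 - u)" "2 \<le> v + 1 - u"
      using \<open>d = 1\<close> uvd by (simp_all add: admissible_shift_def)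
    with False have "4 \<le> v + 1 - u" by presburger
    with \<open>d = 1\<close> uvd show ?thesis
      by (intro minor_positive_minor_nonneg[OF g]) (auto simp: admissible_shift_def)
  qed
  ultimately show ?thesis using True coeff_minor_exchange[of g u v] by simp
next
  case False
  with uvd have "2 \<le> d" by (simp add: admissible_shift_def)
  then show ?thesis
    by (auto intro!: add_nonneg_nonneg minor_positive_minor_nonneg_shifted[OF g uvd])
qed

lemma quadratic_mult_minor_witness:
  assumes g: "minor_positive g" and uvd: "admissible_shift u v d" and q: "0 < q"
    and p: "0 < p \<or> 2 \<le> degree g"
    and u: "0 \<le> u - d" "u \<le> int (degree g) + 2" and v: "0 \<le> v" "v \<le> int (degree g) + 2"
  shows "0 < q\<^sup>2 * coeff_minor g u v d \<or> 0 < coeff_minor g (u - 2) (v - 2) d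
    \<or> 0 < q * coeff_minor g u (v - 2) (d + 2) + q * coeff_minor g (u - 2) v (d - 2)
    \<or> 0 < p * coeff_minor g (u - 1) (v - 2) (d + 1)"
proof -
  define m where "m = int (degree g)"
  have d: "1 \<le> d" "2 \<le> v + d - u" "even (v + d - u)"
    using uvd by (simp_all add: admissible_shift_def)
  have "2 \<le> v" using u d by linarith
  consider "u \<le> m \<and> v \<le> m" | "2 \<le> u \<and> 2 \<le> v" | "u = 1" "d = 1" "m < v"
    using u d \<open>2 \<le> v\<close> by linarith
  then show ?thesis
  proof cases
    case 1
    then show ?thesis using minor_positive_minor_pos[OF g uvd] u v d q m_def by simp
  next
    case 2
    then have "0 < coeff_minor g (u - 2) (v - 2) d"
      using u v d m_def by (intro minor_positive_minor_pos[OF g] admissible_shift_cong[OF uvd]) auto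
    then show ?thesis by blast
  next
    case 3
    \<comment> \<open>only the corner u = d = 1 is left; v = 2 forces degree g < 2, which is where p > 0 is needed\<close>
    show ?thesis
    proof (cases "v = 2")
      case True
      then have "0 < p" using p 3 m_def by auto
      moreover have "0 < coeff_minor g 0 0 2"
        using minor_positive_icoeff_pos[OF g, of 0] by (simp add: coeff_minor_def icoeff_neg)
      ultimately show ?thesis using 3 True by simp
    next
      case False
      with 3 d \<open>2 \<le> v\<close> have "4 \<le> v" by presburger
      then have "0 < coeff_minor g 1 (v - 2) 1"
        using 3 d v m_def by (intro minor_positive_minor_pos[OF g]) (auto simp: admissible_shift_def)
      moreover have "0 \<le> coeff_minor g (- 1) v 1"
        using 3 d by (intro minor_positive_minor_nonneg[OF g]) (auto simp: admissible_shift_def)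
      ultimately have "0 < coeff_minor g u (v - 2) (d + 2) + coeff_minor g (u - 2) v (d - 2)"
        using 3 coeff_minor_exchange[of g u v] by simp
      then show ?thesis using q by (simp add: distrib_left[symmetric])
    qed
  qed
qed

lemma quadratic_mult_icoeff_pos:
  assumes g: "minor_positive g" and p: "0 \<le> p" and q: "0 < q" and p_deg: "0 < p \<or> 2 \<le> degree g"
    and i: "0 \<le> i" "i \<le> int (degree g) + 2"
  shows "0 < icoeff ([:q, p, 1:] * g) i"
proof -
  note nonneg = minor_positive_icoeff_nonneg[OF g]
  have "0 < q * icoeff g i \<or> 0 < p * icoeff g (i - 1) \<or> 0 < icoeff g (i - 2)"
  proof (cases "i \<le> int (degree g) \<or> 2 \<le> i")
    case True
    then show ?thesis using minor_positive_icoeff_pos[OF g] i q by auto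
  next
    case False
    then have "i = 1" "degree g = 0" using i by auto
    then show ?thesis using minor_positive_icoeff_pos[OF g, of 0] p_deg by simp
  qed
  moreover have "0 \<le> q * icoeff g i" "0 \<le> p * icoeff g (i - 1)"
    using nonneg p q by simp_all
  ultimately show ?thesis
    unfolding icoeff_quadratic_mult using nonneg[of "i - 2"] by linarith
qed

lemma minor_positive_quadratic_mult:
  assumes g: "minor_positive g" and p: "0 \<le> p" and q: "0 < q" and p_deg: "0 < p \<or> 2 \<le> degree g"
  shows "minor_positive ([:q, p, 1:] * g)"
proof (rule minor_positiveI)
  define m where "m = int (degree g)"
  have deg: "int (degree ([:q, p, 1:] * g)) = m + 2"
    using degree_quadratic_mult[OF minor_positive_nonzero[OF g]] by (simp add: m_def)
  show "0 < icoeff ([:q, p, 1:] * g) i" if "0 \<le> i" "i \<le> int (degree ([:q, p, 1:] * g))" for i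
    using quadratic_mult_icoeff_pos[OF g p q p_deg] that deg m_def by simp
  fix u v d
  assume uvd: "admissible_shift u v d" and u: "0 \<le> u - d" "u \<le> int (degree ([:q, p, 1:] * g))"
    and v: "0 \<le> v" "v \<le> int (degree ([:q, p, 1:] * g))"
  let ?M = "coeff_minor g"
  have d: "1 \<le> d" using uvd by (simp add: admissible_shift_def)
  have "0 \<le> ?M u v d" "0 \<le> ?M u (v - 1) (d + 1)" "0 \<le> ?M (u - 1) v (d - 1)"
    "0 \<le> ?M (u - 1) (v - 1) d" "0 \<le> ?M (u - 1) (v - 2) (d + 1)" "0 \<le> ?M (u - 2) (v - 1) (d - 1)"
    "0 \<le> ?M (u - 2) (v - 2) d"
    using d by (auto intro: minor_positive_minor_nonneg_shifted[OF g uvd])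
  moreover have "0 \<le> ?M u (v - 2) (d + 2) + ?M (u - 2) v (d - 2)"
    using minor_positive_minor_pair_nonneg[OF g uvd] .
  ultimately have "0 \<le> q\<^sup>2 * ?M u v d" "0 \<le> q * p * ?M u (v - 1) (d + 1)"
    "0 \<le> p * q * ?M (u - 1) v (d - 1)" "0 \<le> p\<^sup>2 * ?M (u - 1) (v - 1) d"
    "0 \<le> p * ?M (u - 1) (v - 2) (d + 1)" "0 \<le> p * ?M (u - 2) (v - 1) (d - 1)"
    "0 \<le> q * ?M u (v - 2) (d + 2) + q * ?M (u - 2) v (d - 2)" "0 \<le> ?M (u - 2) (v - 2) d"
    using p q by (simp_all add: distrib_left[symmetric])
  moreover have "0 < q\<^sup>2 * ?M u v d \<or> 0 < ?M (u - 2) (v - 2) d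
    \<or> 0 < q * ?M u (v - 2) (d + 2) + q * ?M (u - 2) v (d - 2) \<or> 0 < p * ?M (u - 1) (v - 2) (d + 1)"
    using quadratic_mult_minor_witness[OF g uvd q p_deg] u v deg m_def by simp
  ultimately show "0 < coeff_minor ([:q, p, 1:] * g) u v d"
    unfolding coeff_minor_quadratic_mult by linarith
qed

(* coeff_minor e i i 2 = c_i^2 - c_(i-2) c_(i+2): strict log-concavity in steps of two. *)

definition even_log_concave :: "'a::linordered_idom poly \<Rightarrow> bool" where
  "even_log_concave e \<longleftrightarrow> even (degree e) \<and> (\<forall>i. odd i \<longrightarrow> icoeff e i = 0) \<and>
     (\<forall>i\<in>{0..int (degree e)}. even i \<longrightarrow> 0 < icoeff e i \<and> 0 < coeff_minor e i i 2)"

lemma even_log_concave_nonzero: "even_log_concave e \<Longrightarrow> e \<noteq> 0"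
  by (auto simp: even_log_concave_def icoeff_def)

lemma even_log_concave_icoeff_odd: "even_log_concave e \<Longrightarrow> odd i \<Longrightarrow> icoeff e i = 0"
  by (simp add: even_log_concave_def)

lemma even_log_concave_icoeff_pos:
  "even_log_concave e \<Longrightarrow> even i \<Longrightarrow> 0 \<le> i \<Longrightarrow> i \<le> int (degree e) \<Longrightarrow> 0 < icoeff e i"
  by (simp add: even_log_concave_def)

lemma even_log_concave_minor_pos:
  "even_log_concave e \<Longrightarrow> even i \<Longrightarrow> 0 \<le> i \<Longrightarrow> i \<le> int (degree e) \<Longrightarrow> 0 < coeff_minor e i i 2"
  by (simp add: even_log_concave_def)

lemma even_log_concave_icoeff_nonneg:
  assumes "even_log_concave e" shows "0 \<le> icoeff e i"
  using even_log_concave_icoeff_pos[OF assms, of i] even_log_concave_icoeff_odd[OF assms, of i]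
  by (cases "0 \<le> i \<and> i \<le> int (degree e)"; cases "even i")
    (auto simp: icoeff_neg icoeff_gt_degree less_imp_le)

lemma even_log_concave_minor_nonneg:
  assumes e: "even_log_concave e" shows "0 \<le> coeff_minor e i i 2"
proof (cases "even i \<and> 0 \<le> i \<and> i \<le> int (degree e)")
  case True
  then show ?thesis using even_log_concave_minor_pos[OF e] by (auto intro: less_imp_le)
next
  case False
  then have "icoeff e (i - 2) * icoeff e (i + 2) = 0"
    using even_log_concave_icoeff_odd[OF e, of "i - 2"] by (auto simp: icoeff_neg icoeff_gt_degree)
  moreover have "0 \<le> icoeff e i * icoeff e i"
    by simp
  ultimately show ?thesis unfolding coeff_minor_def by linarith
qed

lemma even_log_concave_minor_4_nonneg:
  assumes e: "even_log_concave e" and i: "even i"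
  shows "0 \<le> coeff_minor e i (i - 2) 4"
proof -
  let ?c = "icoeff e"
  have "?c (i - 4) * ?c (i + 2) \<le> ?c i * ?c (i - 2)"
  proof (cases "0 \<le> i - 2 \<and> i \<le> int (degree e)")
    case True
    have pos: "0 < ?c i" "0 < ?c (i - 2)"
      using True i by (auto intro: even_log_concave_icoeff_pos[OF e])
    have "?c (i - 2) * ?c (i + 2) \<le> ?c i * ?c i" "?c (i - 4) * ?c i \<le> ?c (i - 2) * ?c (i - 2)"
      using even_log_concave_minor_nonneg[OF e, of i] even_log_concave_minor_nonneg[OF e, of "i - 2"]
      by (simp_all add: coeff_minor_def)
    then have "(?c (i - 2) * ?c (i + 2)) * (?c (i - 4) * ?c i) \<le> (?c i * ?c i) * (?c (i - 2) * ?c (i - 2))"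
      using even_log_concave_icoeff_nonneg[OF e] by (rule_tac mult_mono) simp_all
    then have "(?c i * ?c (i - 2)) * (?c (i - 4) * ?c (i + 2)) \<le> (?c i * ?c (i - 2)) * (?c i * ?c (i - 2))"
      by (simp add: algebra_simps)
    then show ?thesis
      using pos by (simp add: mult_le_cancel_left_pos)
  next
    case False
    then have "?c (i - 4) * ?c (i + 2) = 0"
      by (auto simp: icoeff_neg icoeff_gt_degree)
    moreover have "0 \<le> ?c i * ?c (i - 2)"
      using even_log_concave_icoeff_nonneg[OF e] by simp
    ultimately show ?thesis by linarith
  qed
  moreover have "i - 2 + 4 = i + 2" by simp
  ultimately show ?thesis unfolding coeff_minor_def by (simp only: diff_ge_0_iff_ge)
qed

lemma even_log_concave_one: "even_log_concave 1"
  by (auto simp: even_log_concave_def icoeff_def coeff_minor_def)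

lemma even_log_concave_quadratic_mult:
  assumes e: "even_log_concave e" and q: "0 < q"
  shows "even_log_concave ([:q, 0, 1:] * e)"
proof -
  let ?e = "[:q, 0, 1:] * e"
  define m where "m = int (degree e)"
  have deg: "int (degree ?e) = m + 2"
    using degree_quadratic_mult[OF even_log_concave_nonzero[OF e]] by (simp add: m_def)
  have even_m: "even m"
    using e by (simp add: even_log_concave_def m_def)
  have "0 < icoeff ?e i \<and> 0 < coeff_minor ?e i i 2"
    if i: "even i" "0 \<le> i" "i \<le> int (degree ?e)" for i
  proof
    have "i \<le> m + 2" "0 \<le> m" using i deg m_def by simp_all
    then have "i \<le> m \<or> 0 \<le> i - 2 \<and> i - 2 \<le> m"
      using i(1,2) even_m by presburger
    then have "0 < icoeff e i \<and> 0 < coeff_minor e i i 2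
        \<or> 0 < icoeff e (i - 2) \<and> 0 < coeff_minor e (i - 2) (i - 2) 2"
      using e i(1,2) m_def unfolding even_log_concave_def by auto
    then have coeff_pos: "0 < q * icoeff e i \<or> 0 < icoeff e (i - 2)"
      and minor_pos: "0 < q\<^sup>2 * coeff_minor e i i 2 \<or> 0 < coeff_minor e (i - 2) (i - 2) 2"
      using q by auto
    have "0 \<le> q * icoeff e i" "0 \<le> icoeff e (i - 2)"
      using q even_log_concave_icoeff_nonneg[OF e] by simp_all
    with coeff_pos show "0 < icoeff ?e i"
      unfolding icoeff_quadratic_mult by auto
    have "0 \<le> q\<^sup>2 * coeff_minor e i i 2" "0 \<le> q * coeff_minor e i (i - 2) 4"
      "0 \<le> coeff_minor e (i - 2) (i - 2) 2"
      using q i even_log_concave_minor_nonneg[OF e] even_log_concave_minor_4_nonneg[OF e] by simp_all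
    moreover have "coeff_minor ?e i i 2
        = q\<^sup>2 * coeff_minor e i i 2 + q * coeff_minor e i (i - 2) 4 + coeff_minor e (i - 2) (i - 2) 2"
      by (simp add: coeff_minor_quadratic_mult)
    ultimately show "0 < coeff_minor ?e i i 2" using minor_pos by linarith
  qed
  moreover have "even (degree ?e)"
    using e degree_quadratic_mult[OF even_log_concave_nonzero[OF e]] by (simp add: even_log_concave_def)
  moreover have "icoeff ?e i = 0" if "odd i" for i
    using that by (simp add: icoeff_quadratic_mult even_log_concave_icoeff_odd[OF e])
  ultimately show ?thesis by (simp add: even_log_concave_def)
qed

inductive hurwitz_product :: "real poly \<Rightarrow> bool" where
  hurwitz_product_1: "hurwitz_product 1"
| hurwitz_product_linear: "hurwitz_product h \<Longrightarrow> 0 < c \<Longrightarrow> hurwitz_product ([:c, 1:] * h)"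
| hurwitz_product_quadratic:
    "hurwitz_product h \<Longrightarrow> 0 < p \<Longrightarrow> 0 < q \<Longrightarrow> hurwitz_product ([:q, p, 1:] * h)"

inductive imag_axis_product :: "real poly \<Rightarrow> bool" where
  imag_axis_product_1: "imag_axis_product 1"
| imag_axis_product_quadratic: "imag_axis_product e \<Longrightarrow> 0 < q \<Longrightarrow> imag_axis_product ([:q, 0, 1:] * e)"

lemma hurwitz_product_minor_positive: "hurwitz_product h \<Longrightarrow> minor_positive h"
proof (induction rule: hurwitz_product.induct)
  case hurwitz_product_1
  show ?case by (auto simp: minor_positive_def coeff_minor_def icoeff_def admissible_shift_def)
qed (auto intro: minor_positive_linear_mult minor_positive_quadratic_mult)

lemma imag_axis_product_even_log_concave: "imag_axis_product e \<Longrightarrow> even_log_concave e"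
  by (induction rule: imag_axis_product.induct)
    (auto intro: even_log_concave_one even_log_concave_quadratic_mult)

lemma imag_axis_product_mult_minor_positive:
  assumes "imag_axis_product e" "minor_positive h" "2 \<le> degree h"
  shows "minor_positive (e * h)"
  using assms
proof (induction rule: imag_axis_product.induct)
  case (imag_axis_product_quadratic e q)
  have "e \<noteq> 0"
    using imag_axis_product_quadratic.hyps even_log_concave_nonzero imag_axis_product_even_log_concave by blast
  then have "2 \<le> degree (e * h)"
    using imag_axis_product_quadratic.prems minor_positive_nonzero[of h] by (simp add: degree_mult_eq)
  then have "minor_positive ([:q, 0, 1:] * (e * h))"
    using imag_axis_product_quadratic by (intro minor_positive_quadratic_mult) auto
  then show ?case by (simp add: mult.assoc)
qed simp

lemma hurwitz_product_nonzero: "hurwitz_product h \<Longrightarrow> h \<noteq> 0"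
  using hurwitz_product_minor_positive minor_positive_nonzero by blast

lemma hurwitz_product_degree_le_1:
  assumes "hurwitz_product h" "degree h \<le> 1"
  shows "h = 1 \<or> (\<exists>c>0. h = [:c, 1:])"
  using assms
proof (induction rule: hurwitz_product.induct)
  case (hurwitz_product_linear h c)
  then have "h = 1"
    using degree_linear_mult[OF hurwitz_product_nonzero[of h]] by (auto simp: one_pCons)
  then show ?case using hurwitz_product_linear by auto
next
  case (hurwitz_product_quadratic h p q)
  then show ?case using degree_quadratic_mult[OF hurwitz_product_nonzero[of h]] by simp
qed simp

lemma map_poly_of_real_mult:
  "map_poly complex_of_real (p * q) = map_poly complex_of_real p * map_poly complex_of_real q"
  by (simp add: poly_eq_iff coeff_map_poly coeff_mult of_real_sum)

lemma map_poly_of_real_add: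
  "map_poly complex_of_real (p + q) = map_poly complex_of_real p + map_poly complex_of_real q"
  by (simp add: poly_eq_iff coeff_map_poly)

lemma poly_map_poly_of_real:
  "poly (map_poly complex_of_real p) (complex_of_real x) = complex_of_real (poly p x)"
  by (induction p) (auto simp: map_poly_pCons)

lemma nonreal_root_quadratic_factor:
  fixes g :: "real poly" and w :: complex
  defines "Q \<equiv> [:(cmod w)\<^sup>2, - 2 * Re w, 1:]"
  assumes root: "poly (map_poly complex_of_real g) w = 0" and nonreal: "Im w \<noteq> 0"
  shows "g = Q * (g div Q)"
proof -
  let ?C = "map_poly complex_of_real"
  define R where "R = g mod Q"
  have "degree R \<le> 1"
    using degree_mod_less[of Q g] by (auto simp: R_def Q_def)
  then have R: "R = [:coeff R 0, coeff R 1:]"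
    by (auto simp: poly_eq_iff coeff_pCons coeff_eq_0 split: nat.splits)
  have "(cmod w)\<^sup>2 = Re w * Re w + Im w * Im w"
    using cmod_power2[of w] by (simp add: power2_eq_square)
  then have "poly (?C Q) w = 0"
    by (simp add: Q_def map_poly_pCons complex_eq_iff algebra_simps)
  moreover have "?C g = ?C (g div Q) * ?C Q + ?C R"
    unfolding R_def map_poly_of_real_mult[symmetric] map_poly_of_real_add[symmetric] by simp
  ultimately have "poly (?C R) w = 0"
    using root by simp
  then have "complex_of_real (coeff R 0) + w * complex_of_real (coeff R 1) = 0"
    by (subst (asm) R) (simp add: map_poly_pCons)
  then have "coeff R 1 = 0" "coeff R 0 = 0"
    using nonreal by (auto simp: complex_eq_iff)
  then have "R = 0"
    by (subst R) simp
  moreover have "g div Q * Q + R = g"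
    unfolding R_def by (rule div_mult_mod_eq)
  ultimately show ?thesis
    by (simp add: mult.commute)
qed

definition elementary_stable_factor :: "real poly \<Rightarrow> bool" where
  "elementary_stable_factor Q \<longleftrightarrow> Q = [:0, 1:] \<or> (\<exists>c>0. Q = [:c, 1:]) \<or> (\<exists>q>0. Q = [:q, 0, 1:])
     \<or> (\<exists>p>0. \<exists>q>0. Q = [:q, p, 1:])"

lemma elementary_stable_factor_degree:
  "elementary_stable_factor Q \<Longrightarrow> lead_coeff Q = 1 \<and> 0 < degree Q"
  by (auto simp: elementary_stable_factor_def)

lemma elementary_stable_factor_exists:
  fixes g :: "real poly"
  assumes root: "poly (map_poly complex_of_real g) w = 0" and left: "Re w \<le> 0"
  shows "\<exists>Q g'. elementary_stable_factor Q \<and> g = Q * g'"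
proof (cases "Im w = 0")
  case True
  then have "w = complex_of_real (Re w)"
    by (simp add: complex_eq_iff)
  then have "poly g (Re w) = 0"
    using root poly_map_poly_of_real[of g "Re w"] by simp
  then have "g = [:- Re w, 1:] * synthetic_div g (Re w)"
    using synthetic_div_correct'[of "Re w" g] by simp
  moreover have "elementary_stable_factor [:- Re w, 1:]"
    using left by (cases "Re w = 0") (auto simp: elementary_stable_factor_def)
  ultimately show ?thesis by blast
next
  case False
  then have "0 < (cmod w)\<^sup>2"
    by (simp add: cmod_power2 sum_power2_gt_zero_iff)
  then have "elementary_stable_factor [:(cmod w)\<^sup>2, - 2 * Re w, 1:]"
    using left by (cases "Re w = 0") (auto simp: elementary_stable_factor_def)
  with nonreal_root_quadratic_factor[OF root False] show ?thesis by blast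
qed

definition stable_factorization :: "real poly \<Rightarrow> bool" where
  "stable_factorization g \<longleftrightarrow>
     (\<exists>k e h. imag_axis_product e \<and> hurwitz_product h \<and> g = monom 1 k * (e * h))"

lemma stable_factorization_mult:
  assumes Q: "elementary_stable_factor Q" and g: "stable_factorization g"
  shows "stable_factorization (Q * g)"
proof -
  obtain k e h where e: "imag_axis_product e" and h: "hurwitz_product h" and g: "g = monom 1 k * (e * h)"
    using g by (auto simp: stable_factorization_def)
  consider "Q = [:0, 1:]" | c where "0 < c" "Q = [:c, 1:]" | q where "0 < q" "Q = [:q, 0, 1:]"
    | p q where "0 < p" "0 < q" "Q = [:q, p, 1:]"
    using Q by (auto simp: elementary_stable_factor_def)
  then show ?thesis
  proof cases
    case 1
    have "Q * g = monom 1 (Suc k) * (e * h)"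
      by (simp add: 1 g monom_Suc mult_pCons_left)
    with e h show ?thesis
      unfolding stable_factorization_def by blast
  next
    case 2
    have "Q * g = monom 1 k * (e * ([:c, 1:] * h))"
      by (simp only: 2 g mult_ac)
    with e hurwitz_product_linear[OF h \<open>0 < c\<close>] show ?thesis
      unfolding stable_factorization_def by blast
  next
    case 3
    have "Q * g = monom 1 k * (([:q, 0, 1:] * e) * h)"
      by (simp only: 3 g mult_ac)
    with imag_axis_product_quadratic[OF e \<open>0 < q\<close>] h show ?thesis
      unfolding stable_factorization_def by blast
  next
    case 4
    have "Q * g = monom 1 k * (e * ([:q, p, 1:] * h))"
      by (simp only: 4 g mult_ac)
    with e hurwitz_product_quadratic[OF h \<open>0 < p\<close> \<open>0 < q\<close>] show ?thesis
      unfolding stable_factorization_def by blast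
  qed
qed

lemma stable_factorizationI:
  fixes g :: "real poly"
  assumes "lead_coeff g = 1" and "\<forall>z. poly (map_poly complex_of_real g) z = 0 \<longrightarrow> Re z \<le> 0"
  shows "stable_factorization g"
  using assms
proof (induction "degree g" arbitrary: g rule: less_induct)
  case less
  show ?case
  proof (cases "degree g = 0")
    case True
    with less.prems have "g = 1"
      by (metis degree_0_id one_pCons)
    then have "g = monom 1 0 * (1 * 1)"
      by simp
    then show ?thesis
      using imag_axis_product_1 hurwitz_product_1 unfolding stable_factorization_def by blast
  next
    case False
    then have "\<not> constant (poly (map_poly complex_of_real g))"
      by (simp add: constant_degree degree_map_poly)
    then obtain w where w: "poly (map_poly complex_of_real g) w = 0"
      using fundamental_theorem_of_algebra by blast
    then obtain Q g' where Q: "elementary_stable_factor Q" and g: "g = Q * g'"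
      using elementary_stable_factor_exists less.prems(2) by blast
    have "g' \<noteq> 0" "Q \<noteq> 0" using g less.prems(1) by auto
    then have "lead_coeff g' = 1" "degree g' < degree g"
      using elementary_stable_factor_degree[OF Q] less.prems(1) g
      by (simp_all add: lead_coeff_mult) (simp add: degree_mult_eq)
    moreover have "\<forall>z. poly (map_poly complex_of_real g') z = 0 \<longrightarrow> Re z \<le> 0"
      using less.prems(2) by (simp add: g map_poly_of_real_mult)
    ultimately have "stable_factorization g'"
      using less.hyps by blast
    then show ?thesis
      using Q g stable_factorization_mult by blast
  qed
qed

definition dcoeff :: "'a::zero poly \<Rightarrow> int \<Rightarrow> 'a" where
  "dcoeff g j = icoeff g (int (degree g) - j)"

lemma acoef_eq_dcoeff: "acoef f k = dcoeff f (int k)"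
  by (simp add: acoef_def dcoeff_def icoeff_def nat_diff_distrib)

lemma dcoeff_nonzero_range: "dcoeff g j \<noteq> 0 \<Longrightarrow> 0 \<le> j \<and> j \<le> int (degree g)"
  by (rule ccontr) (auto simp: dcoeff_def icoeff_neg icoeff_gt_degree)

lemma dcoeff_linear_mult:
  fixes g :: "'a::idom poly"
  assumes "g \<noteq> 0"
  shows "dcoeff ([:c, 1:] * g) j = dcoeff g j + c * dcoeff g (j - 1)"
  unfolding dcoeff_def degree_linear_mult[OF assms] icoeff_linear_mult by (simp add: algebra_simps)

lemma acoef_monom_mult:
  assumes "f \<noteq> 0"
  shows "acoef (monom 1 k * f) n = acoef f n"
proof -
  have "degree (monom 1 k * f) = k + degree f"
    using assms by (simp add: degree_mult_eq degree_monom_eq)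
  then show ?thesis
    by (auto simp: acoef_def coeff_monom_mult coeff_eq_0)
qed

lemma decreasing_ratio_nonpos:
  fixes b0 b1 b2 b3 r :: "'a::linordered_idom"
  assumes "0 < b0" "0 < b2" "b3 * b0 < b2 * b1" "b1 - r * b0 \<le> 0"
  shows "b3 - r * b2 < 0"
proof -
  have "b3 * b0 < b2 * b1" by fact
  also have "\<dots> \<le> b2 * (r * b0)"
    using assms(2,4) by (intro mult_left_mono) auto
  finally have "b3 * b0 < (r * b2) * b0"
    by (simp add: algebra_simps)
  then show ?thesis
    using assms(1) by (simp add: mult_less_cancel_right)
qed

definition nonpos_propagates :: "(nat \<Rightarrow> 'a::linordered_idom) \<Rightarrow> bool" where
  "nonpos_propagates a \<longleftrightarrow>
     (\<forall>k n. 1 \<le> k \<longrightarrow> k + 2 \<le> n \<longrightarrow> even (n - k) \<longrightarrow> a k \<le> 0 \<longrightarrow> a n \<noteq> 0 \<longrightarrow> a (k + 2) < 0)"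

lemma nonpos_propagatesI:
  assumes "\<And>k n. 1 \<le> k \<Longrightarrow> k + 2 \<le> n \<Longrightarrow> even (n - k) \<Longrightarrow> a k \<le> 0 \<Longrightarrow> a n \<noteq> 0 \<Longrightarrow> a (k + 2) < 0"
  shows "nonpos_propagates a"
  using assms by (simp add: nonpos_propagates_def)

lemma minor_positive_nonpos_propagates:
  assumes G: "minor_positive G"
  shows "nonpos_propagates (\<lambda>k. dcoeff G (int k) - r * dcoeff G (int k - 1))"
proof (rule nonpos_propagatesI)
  fix k n :: nat
  assume k: "1 \<le> k" "k + 2 \<le> n" and nonpos: "dcoeff G (int k) - r * dcoeff G (int k - 1) \<le> 0"
    and nonzero: "dcoeff G (int n) - r * dcoeff G (int n - 1) \<noteq> 0"
  define m where "m = int (degree G)"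
  from nonzero have "dcoeff G (int n) \<noteq> 0 \<or> dcoeff G (int n - 1) \<noteq> 0"
    by auto
  then have "int n - 1 \<le> m"
    using dcoeff_nonzero_range[of G] m_def by force
  then have pos: "0 < dcoeff G j" if "0 \<le> j" "j \<le> int k + 1" for j
    using that k minor_positive_icoeff_pos[OF G] by (simp add: dcoeff_def m_def)
  have "admissible_shift (m - int k - 1) (m - int k) 1"
    by (simp add: admissible_shift_def)
  then have "0 < coeff_minor G (m - int k - 1) (m - int k) 1"
    using \<open>int n - 1 \<le> m\<close> k m_def by (intro minor_positive_minor_pos[OF G]) auto
  then have "dcoeff G (int k + 2) * dcoeff G (int k - 1) < dcoeff G (int k + 1) * dcoeff G (int k)"
    by (simp add: coeff_minor_def dcoeff_def m_def algebra_simps)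
  then show "dcoeff G (int (k + 2)) - r * dcoeff G (int (k + 2) - 1) < 0"
    using decreasing_ratio_nonpos[OF pos pos _ nonpos] k by (simp add: algebra_simps)
qed

lemma even_log_concave_dcoeff_odd: "even_log_concave e \<Longrightarrow> odd j \<Longrightarrow> dcoeff e j = 0"
  by (simp add: dcoeff_def even_log_concave_def)

lemma even_log_concave_dcoeff_pos:
  "even_log_concave e \<Longrightarrow> even j \<Longrightarrow> 0 \<le> j \<Longrightarrow> j \<le> int (degree e) \<Longrightarrow> 0 < dcoeff e j"
  by (simp add: dcoeff_def even_log_concave_def)

lemma even_log_concave_dcoeff_log_concave:
  assumes "even_log_concave e" "even j" "0 \<le> j" "j \<le> int (degree e)"
  shows "dcoeff e (j + 2) * dcoeff e (j - 2) < dcoeff e j * dcoeff e j"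
proof -
  have "0 < coeff_minor e (int (degree e) - j) (int (degree e) - j) 2"
    using assms by (intro even_log_concave_minor_pos) (auto simp: even_log_concave_def)
  then show ?thesis
    by (simp add: coeff_minor_def dcoeff_def algebra_simps)
qed

lemma even_log_concave_nonpos_propagates:
  assumes e: "even_log_concave e"
  shows "nonpos_propagates (\<lambda>k. dcoeff e (int k) - r * dcoeff e (int k - 1))"
proof (rule nonpos_propagatesI)
  fix k n :: nat
  assume k: "1 \<le> k" "k + 2 \<le> n" "even (n - k)"
    and nonpos: "dcoeff e (int k) - r * dcoeff e (int k - 1) \<le> 0"
    and nonzero: "dcoeff e (int n) - r * dcoeff e (int n - 1) \<noteq> 0"
  note odd_0 = even_log_concave_dcoeff_odd[OF e] and pos = even_log_concave_dcoeff_pos[OF e]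
  show "dcoeff e (int (k + 2)) - r * dcoeff e (int (k + 2) - 1) < 0"
  proof (cases "even k")
    case True
    \<comment> \<open>at even positions the sequence is just the positive coefficients, so this case is vacuous\<close>
    with k have "even n" by simp
    with nonzero odd_0 have "dcoeff e (int n) \<noteq> 0" by simp
    then have "int k \<le> int (degree e)" using dcoeff_nonzero_range k by force
    with True nonpos odd_0 pos[of "int k"] show ?thesis by simp
  next
    case False
    with k have "odd n" by simp
    with nonzero odd_0 have "r \<noteq> 0" "dcoeff e (int n - 1) \<noteq> 0" by simp_all
    then have "int n - 1 \<le> int (degree e)" using dcoeff_nonzero_range by blast
    then have "0 < dcoeff e (int k - 1)" "0 < dcoeff e (int k + 1)"
      using False k by (auto intro!: pos)
    moreover from this have "0 < r"
      using nonpos False odd_0 \<open>r \<noteq> 0\<close> by (auto simp: zero_le_mult_iff)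
    ultimately show ?thesis
      using False odd_0 by (simp add: algebra_simps)
  qed
qed

lemma even_log_concave_linear_mult_nonpos_propagates:
  assumes e: "even_log_concave e" and c: "0 < c"
  shows "nonpos_propagates (\<lambda>k. dcoeff ([:c, 1:] * e) (int k) - r * dcoeff ([:c, 1:] * e) (int k - 1))"
proof (rule nonpos_propagatesI)
  fix k n :: nat
  let ?b = "dcoeff e" and ?a = "\<lambda>j. dcoeff ([:c, 1:] * e) j - r * dcoeff ([:c, 1:] * e) (j - 1)"
  assume k: "1 \<le> k" "k + 2 \<le> n" "even (n - k)" and nonpos: "?a (int k) \<le> 0"
    and nonzero: "?a (int n) \<noteq> 0"
  note odd_0 = even_log_concave_dcoeff_odd[OF e] and pos = even_log_concave_dcoeff_pos[OF e]
  have a: "?a j = ?b j + c * ?b (j - 1) - r * (?b (j - 1) + c * ?b (j - 2))" for j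
    using dcoeff_linear_mult[OF even_log_concave_nonzero[OF e]] by (simp add: algebra_simps)
  show "?a (int (k + 2)) < 0"
  proof (cases "even k")
    case True
    \<comment> \<open>here the step comes from the log-concavity of e\<close>
    then have a_even: "?a j = ?b j - (r * c) * ?b (j - 2)" if "even j" for j
      using a[of j] odd_0 that by (simp add: algebra_simps)
    from True k have "even n" by simp
    with nonzero a_even[of "int n"] have "?b (int n) \<noteq> 0 \<or> ?b (int n - 2) \<noteq> 0" by auto
    then have "int k \<le> int (degree e)"
      using dcoeff_nonzero_range[of e] k by force
    moreover have "2 \<le> k" using True k by presburger
    ultimately have "0 < ?b (int k - 2)" "0 < ?b (int k)"
      "?b (int k + 2) * ?b (int k - 2) < ?b (int k) * ?b (int k)"
      using True by (auto intro!: pos even_log_concave_dcoeff_log_concave[OF e])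
    moreover have "?b (int k) - (r * c) * ?b (int k - 2) \<le> 0"
      using nonpos a_even[of "int k"] True by simp
    ultimately have "?b (int k + 2) - (r * c) * ?b (int k) < 0"
      by (rule decreasing_ratio_nonpos)
    then show ?thesis
      using True a_even[of "int k + 2"] by (simp add: add.commute)
  next
    case False
    then have a_odd: "?a j = (c - r) * ?b (j - 1)" if "odd j" for j
      using a[of j] odd_0 that by (simp add: algebra_simps)
    from False k have "odd n" by simp
    with nonzero a_odd[of "int n"] have "c \<noteq> r" "?b (int n - 1) \<noteq> 0" by auto
    then have "int n - 1 \<le> int (degree e)" using dcoeff_nonzero_range by blast
    then have b_pos: "0 < ?b (int k - 1)" "0 < ?b (int k + 1)"
      using False k by (auto intro!: pos)
    with nonpos a_odd[of "int k"] False \<open>c \<noteq> r\<close> have "c < r"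
      by (auto simp: mult_le_0_iff)
    with b_pos have "(c - r) * ?b (int k + 1) < 0"
      by (simp add: mult_neg_pos)
    then show ?thesis
      using False a_odd[of "int k + 2"] by (simp add: add.commute)
  qed
qed

lemma stable_factorization_nonpos_propagates:
  assumes "stable_factorization g"
  shows "nonpos_propagates (acoef ([:- r, 1:] * g))"
proof -
  obtain k e h where e: "imag_axis_product e" and h: "hurwitz_product h"
    and g: "g = monom 1 k * (e * h)"
    using assms by (auto simp: stable_factorization_def)
  have e_lc: "even_log_concave e"
    using e by (rule imag_axis_product_even_log_concave)
  have nonzero: "e * h \<noteq> 0"
    using even_log_concave_nonzero[OF e_lc] hurwitz_product_nonzero[OF h] by simp
  have "[:- r, 1:] * (e * h) \<noteq> 0"
    using nonzero by simp
  then have "acoef ([:- r, 1:] * g) n = acoef ([:- r, 1:] * (e * h)) n" for n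
    using acoef_monom_mult by (metis g mult.left_commute)
  then have a: "acoef ([:- r, 1:] * g) = (\<lambda>n. dcoeff (e * h) (int n) - r * dcoeff (e * h) (int n - 1))"
    using dcoeff_linear_mult[OF nonzero, of "- r"] by (simp add: acoef_eq_dcoeff fun_eq_iff)
  consider "2 \<le> degree h" | "h = 1" | c where "0 < c" "h = [:c, 1:]"
    using hurwitz_product_degree_le_1[OF h] by force
  then show ?thesis
  proof cases
    case 1
    then have "minor_positive (e * h)"
      using imag_axis_product_mult_minor_positive[OF e hurwitz_product_minor_positive[OF h]] by blast
    then show ?thesis unfolding a by (rule minor_positive_nonpos_propagates)
  next
    case 2
    then show ?thesis unfolding a using even_log_concave_nonpos_propagates[OF e_lc] by simp
  next
    case 3
    then show ?thesis unfolding a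
      using even_log_concave_linear_mult_nonpos_propagates[OF e_lc \<open>0 < c\<close>] by (simp add: mult.commute)
  qed
qed

lemma sign_change_pattern:
  fixes A :: "nat \<Rightarrow> 'a::linordered_idom"
  assumes nonpos_step: "\<And>s. 1 \<le> s \<Longrightarrow> s < t \<Longrightarrow> A s \<le> 0 \<Longrightarrow> A (Suc s) < 0"
  shows "(\<forall>j\<in>{1..t}. A j > 0) \<or>
    (\<exists>s\<in>{1..t}. (\<forall>j\<in>{1..<s}. A j > 0) \<and> A s \<le> 0 \<and> (\<forall>j\<in>{s+1..t}. A j < 0))"
proof (cases "\<forall>j\<in>{1..t}. A j > 0")
  case False
  then have ex: "\<exists>j. j \<in> {1..t} \<and> A j \<le> 0"
    by (auto simp: not_less)
  define s where "s = (LEAST j. j \<in> {1..t} \<and> A j \<le> 0)"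
  have s: "s \<in> {1..t}" "A s \<le> 0"
    using LeastI_ex[OF ex] by (simp_all add: s_def)
  have "\<forall>j\<in>{1..<s}. A j > 0"
  proof
    fix j assume j: "j \<in> {1..<s}"
    then have "\<not> (j \<in> {1..t} \<and> A j \<le> 0)"
      unfolding s_def by (intro not_less_Least) simp
    with j s show "A j > 0" by auto
  qed
  moreover have nonpos: "A j \<le> 0" if "s \<le> j" "j \<le> t" for j
    using that
  proof (induction j rule: dec_induct)
    case (step j)
    then show ?case using s nonpos_step[of j] by (auto intro: less_imp_le)
  qed (use s in simp)
  have "\<forall>j\<in>{s+1..t}. A j < 0"
  proof
    fix j assume "j \<in> {s+1..t}"
    then obtain i where "j = Suc i" "s \<le> i" "i < t" by (cases j) auto
    with s nonpos[of i] nonpos_step[of i] show "A j < 0" by auto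
  qed
  ultimately show ?thesis
    using s by blast
qed simp

lemma nonpos_propagates_even_step:
  assumes "nonpos_propagates a" "a (2 * t) \<noteq> 0" "1 \<le> s" "s < t" "a (2 * s) \<le> 0"
  shows "a (2 * Suc s) < 0"
proof -
  have "2 * s + 2 = 2 * Suc s" "2 * s + 2 \<le> 2 * t" "1 \<le> 2 * s" "even (2 * t - 2 * s)"
    using assms(3,4) by simp_all
  then show ?thesis
    using assms unfolding nonpos_propagates_def by metis
qed

lemma nonpos_propagates_odd_step:
  assumes "nonpos_propagates a" "a (2 * t - 1) \<noteq> 0" "1 \<le> s" "s < t" "a (2 * s - 1) \<le> 0"
  shows "a (2 * Suc s - 1) < 0"
proof -
  have "2 * s - 1 + 2 = 2 * Suc s - 1" "2 * s - 1 + 2 \<le> 2 * t - 1" "1 \<le> 2 * s - 1"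
    "even ((2 * t - 1) - (2 * s - 1))"
    using assms(3,4) by (simp_all add: algebra_simps)
  then show ?thesis
    using assms unfolding nonpos_propagates_def by metis
qed

lemma stable_factorization_of_root_list:
  fixes g :: "real poly"
  assumes roots: "map_poly complex_of_real g = (\<Prod>x\<leftarrow>xs. [:- x, 1:])" and left: "\<forall>x\<in>set xs. Re x \<le> 0"
  shows "stable_factorization g"
proof (rule stable_factorizationI)
  have "lead_coeff (map_poly complex_of_real g) = 1"
    unfolding roots by (induction xs) (simp_all add: lead_coeff_mult)
  then show "lead_coeff g = 1"
    by (simp add: degree_map_poly coeff_map_poly)
  have "poly (\<Prod>x\<leftarrow>xs. [:- x, 1:]) z = (\<Prod>x\<leftarrow>xs. z - x)" for z
    by (induction xs) simp_all
  then show "\<forall>z. poly (map_poly complex_of_real g) z = 0 \<longrightarrow> Re z \<le> 0"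
    using left by (auto simp: roots prod_list_zero_iff)
qed

theorem theorem4p1:
  fixes f :: "real poly" and r :: real and xs :: "complex list"
  assumes roots: "map_poly complex_of_real f
                    = [:- complex_of_real r, 1:] * (\<Prod>x\<leftarrow>xs. [:- x, 1:])"
    and left: "\<forall>x\<in>set xs. Re x \<le> 0"
  shows
   "(\<forall>t::nat. acoef f (2*t) \<noteq> 0 \<and> (\<forall>j>t. acoef f (2*j) = 0) \<longrightarrow>
       (\<forall>j\<in>{1..t}. acoef f (2*j) > 0) \<or>
       (\<exists>s\<in>{1..t}. (\<forall>j\<in>{1..<s}. acoef f (2*j) > 0) \<and> acoef f (2*s) \<le> 0 \<and>
                    (\<forall>j\<in>{s+1..t}. acoef f (2*j) < 0)))
    \<and>
    (\<forall>t'::nat. t' \<ge> 1 \<and> acoef f (2*t'-1) \<noteq> 0 \<and> (\<forall>j>t'. acoef f (2*j-1) = 0) \<longrightarrow>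
       (\<forall>j\<in>{1..t'}. acoef f (2*j-1) > 0) \<or>
       (\<exists>s'\<in>{1..t'}. (\<forall>j\<in>{1..<s'}. acoef f (2*j-1) > 0) \<and> acoef f (2*s'-1) \<le> 0 \<and>
                    (\<forall>j\<in>{s'+1..t'}. acoef f (2*j-1) < 0)))"
proof -
  define g where "g = synthetic_div f r"
  have "poly f r = 0"
    using arg_cong[OF roots, of "\<lambda>p. poly p (complex_of_real r)"] by (simp add: poly_map_poly_of_real)
  then have f: "f = [:- r, 1:] * g"
    using synthetic_div_correct'[of r f] by (simp add: g_def)
  have "[:- complex_of_real r, 1:] * map_poly complex_of_real g
      = [:- complex_of_real r, 1:] * (\<Prod>x\<leftarrow>xs. [:- x, 1:])"
    using roots by (simp add: f map_poly_of_real_mult map_poly_pCons)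
  then have "map_poly complex_of_real g = (\<Prod>x\<leftarrow>xs. [:- x, 1:])"
    by simp
  with left have a: "nonpos_propagates (acoef f)"
    unfolding f by (intro stable_factorization_nonpos_propagates stable_factorization_of_root_list)
  have "(\<forall>j\<in>{1..t}. acoef f (2*j) > 0) \<or>
      (\<exists>s\<in>{1..t}. (\<forall>j\<in>{1..<s}. acoef f (2*j) > 0) \<and> acoef f (2*s) \<le> 0 \<and>
                   (\<forall>j\<in>{s+1..t}. acoef f (2*j) < 0))"
    if "acoef f (2*t) \<noteq> 0" for t
    by (rule sign_change_pattern) (use nonpos_propagates_even_step[OF a that] in blast)
  moreover have "(\<forall>j\<in>{1..t}. acoef f (2*j-1) > 0) \<or>
      (\<exists>s\<in>{1..t}. (\<forall>j\<in>{1..<s}. acoef f (2*j-1) > 0) \<and> acoef f (2*s-1) \<le> 0 \<and>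
                   (\<forall>j\<in>{s+1..t}. acoef f (2*j-1) < 0))"
    if "acoef f (2*t-1) \<noteq> 0" for t
    by (rule sign_change_pattern) (use nonpos_propagates_odd_step[OF a that] in blast)
  ultimately show ?thesis
    by blast
qed

end
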